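(* For MLAPD on a path of depth $D$ (a path graph with $D$ nodes whose root is an endpoint), the online algorithm \textsc{Double} is $(4-2^{1-\frac{D}{2}})$-competitive.
   Context: MLAPD: an instance is a rooted tree $\mathcal{T}$ with root $r$ and positive node costs $c(v)>0$, together with requests $\rho=(v,a,d)$ (node, arrival time, deadline $d\ge a$; deadlines distinct). A service $(S,t)$ is a subtree $S\ni r$ transmitted at time $t$, costing $c(S)=\sum_{u\in S}c(u)$; it satisfies $(v,a,d)$ if $v\in S$ and $a\le t\le d$. A feasible schedule satisfies every request; its cost is the sum of service costs. Online: requests revealed at arrival. $c$-competitive: cost at most $c$ times optimal on every instance. For request $\rho$ at $v$, $P_\rho$ is the $r$–$v$ path node set; $c(r\to\gamma\mid S)=c(P_\gamma\setminus S)$. A request is pending at time $t$ if it has arrived by $t$ and was not satisfied earlier. \textsc{Double}: when a pending request $\rho$ reaches its deadline $d_\rho$, set $S=P_\rho$; repeat: if no pending request is unsatisfied by $S$ stop; else let $\gamma$ be the pending request of earliest deadline not satisfied by $S$; if $c(S)+c(r\to\gamma\mid S)>2c(P_\rho)$ stop, else $S\gets S\cup P_\gamma$. Transmit $(S,d_\rho)$. *)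

theory Defs
  imports Complex_Main
begin

text \<open>MLAPD on a path of depth D. Nodes are 1..D, the root is node 1 (an endpoint),
  and the parent of node v > 1 is v - 1. A request is a triple (v, a, d):
  node, arrival time, deadline.\<close>

type_synonym request = "nat \<times> real \<times> real"

definition rnode :: "request \<Rightarrow> nat" where "rnode \<rho> = fst \<rho>"
definition rarr :: "request \<Rightarrow> real" where "rarr \<rho> = fst (snd \<rho>)"
definition rdl :: "request \<Rightarrow> real" where "rdl \<rho> = snd (snd \<rho>)"

definition pathset :: "nat \<Rightarrow> nat set" where "pathset v = {1..v}"

definition rooted_subtree :: "nat \<Rightarrow> nat set \<Rightarrow> bool" where
  "rooted_subtree D S \<longleftrightarrow> S \<subseteq> {1..D} \<and> 1 \<in> S \<and> (\<forall>v\<in>S. v > 1 \<longrightarrow> v - 1 \<in> S)"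

definition setcost :: "(nat \<Rightarrow> real) \<Rightarrow> nat set \<Rightarrow> real" where
  "setcost c S = (\<Sum>u\<in>S. c u)"

type_synonym service = "nat set \<times> real"
type_synonym schedule = "service list"

definition satisfies :: "service \<Rightarrow> request \<Rightarrow> bool" where
  "satisfies s \<rho> \<longleftrightarrow> rnode \<rho> \<in> fst s \<and> rarr \<rho> \<le> snd s \<and> snd s \<le> rdl \<rho>"

definition valid_instance :: "nat \<Rightarrow> (nat \<Rightarrow> real) \<Rightarrow> request list \<Rightarrow> bool" where
  "valid_instance D c rs \<longleftrightarrow> D \<ge> 1 \<and> (\<forall>v\<in>{1..D}. c v > 0)
     \<and> (\<forall>\<rho>\<in>set rs. rnode \<rho> \<in> {1..D} \<and> rarr \<rho> \<le> rdl \<rho>)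
     \<and> distinct (map rdl rs)"

definition feasible :: "nat \<Rightarrow> request list \<Rightarrow> schedule \<Rightarrow> bool" where
  "feasible D rs sch \<longleftrightarrow> (\<forall>s\<in>set sch. rooted_subtree D (fst s))
     \<and> (\<forall>\<rho>\<in>set rs. \<exists>s\<in>set sch. satisfies s \<rho>)"

definition sched_cost :: "(nat \<Rightarrow> real) \<Rightarrow> schedule \<Rightarrow> real" where
  "sched_cost c sch = (\<Sum>s\<leftarrow>sch. setcost c (fst s))"

text \<open>The growth loop of Double for the request \<rho>: the pending requests are given
  sorted by deadline; requests already satisfied by S are skipped, the first one not
  satisfied by S is either added or the loop stops.\<close>
fun grow :: "(nat \<Rightarrow> real) \<Rightarrow> request \<Rightarrow> nat set \<Rightarrow> request list \<Rightarrow> nat set" where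
  "grow c \<rho> S [] = S"
| "grow c \<rho> S (\<gamma> # \<gamma>s) =
     (if rnode \<gamma> \<in> S then grow c \<rho> S \<gamma>s
      else if setcost c S + setcost c (pathset (rnode \<gamma>) - S) > 2 * setcost c (pathset (rnode \<rho>))
      then S else grow c \<rho> (S \<union> pathset (rnode \<gamma>)) \<gamma>s)"

text \<open>One event of Double: processing the deadline of request \<rho> (events are processed
  in increasing order of deadline). State: set of already satisfied requests and the
  schedule produced so far.\<close>
definition double_step :: "(nat \<Rightarrow> real) \<Rightarrow> request list \<Rightarrow> request set \<times> schedule
     \<Rightarrow> request \<Rightarrow> request set \<times> schedule" where
  "double_step c rs st \<rho> =
     (let (sat, sch) = st in
      if \<rho> \<in> sat then (sat, sch)
      else let t = rdl \<rho>;
               pend = filter (\<lambda>\<gamma>. rarr \<gamma> \<le> t \<and> \<gamma> \<notin> sat) (sort_key rdl rs);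
               S = grow c \<rho> (pathset (rnode \<rho>)) pend
           in (sat \<union> {\<gamma>\<in>set rs. satisfies (S, t) \<gamma>}, sch @ [(S, t)]))"

definition double :: "(nat \<Rightarrow> real) \<Rightarrow> request list \<Rightarrow> schedule" where
  "double c rs = snd (fold (\<lambda>\<rho> st. double_step c rs st \<rho>) (sort_key rdl rs) ({}, []))"

text \<open>c-competitiveness of an online algorithm on paths of depth D: on every instance
  it outputs a feasible schedule whose cost is at most ratio times the cost of
  every feasible schedule (hence of an optimal one).\<close>
definition competitive_on_path ::
  "nat \<Rightarrow> ((nat \<Rightarrow> real) \<Rightarrow> request list \<Rightarrow> schedule) \<Rightarrow> real \<Rightarrow> bool" where
  "competitive_on_path D alg ratio \<longleftrightarrow>
     (\<forall>c rs. valid_instance D c rs \<longrightarrow>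
        feasible D rs (alg c rs) \<and>
        (\<forall>sch. feasible D rs sch \<longrightarrow> sched_cost c (alg c rs) \<le> ratio * sched_cost c sch))"

end

theory Submission
  imports Defs
begin

text \<open>On a path every service of Double is a root path {1..m} containing the node
  v of the request that triggered it, and it costs at most twice the cost X v of the
  path to v. Fix any feasible schedule and charge each triggered service
  to a service (Q, \<tau>) of that schedule satisfying the trigger. The triggers charged
  to (Q, \<tau>) all have windows containing \<tau>, so each was pending at the deadline of
  every earlier one; since Double then stopped growing before reaching it, the path costs of
  consecutive charged triggers more than double. A geometric sum, sharpened by the depth of
  the nodes, bounds the earlier services by (2 - 2 powr (1 - v/2)) * X v for the last
  trigger v, and the last one by 2 * X v, while X v \<le> setcost c Q.\<close>

lemma pathset_Un_pathset: "pathset m \<union> pathset w = pathset (max m w)"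
  by (auto simp: pathset_def)

lemma setcost_Un:
  assumes "finite S" "finite P"
  shows "setcost c (S \<union> P) = setcost c S + setcost c (P - S)"
proof -
  have "S \<union> P = S \<union> (P - S)" by auto
  then show ?thesis
    unfolding setcost_def using assms by (simp add: sum.union_disjoint[symmetric])
qed

lemma subtree_pathset:
  assumes "rooted_subtree D Q" "v \<in> Q"
  shows "pathset v \<subseteq> Q"
  using assms(2)
proof (induction v)
  case 0
  then show ?case by (simp add: pathset_def)
next
  case (Suc v)
  show ?case
  proof (cases "v = 0")
    case True
    then show ?thesis using Suc.prems by (simp add: pathset_def)
  next
    case False
    then have "v \<in> Q" using Suc.prems assms(1) by (auto simp: rooted_subtree_def)
    then have "pathset v \<subseteq> Q" by (rule Suc.IH)
    then show ?thesis using Suc.prems by (auto simp: pathset_def le_Suc_eq)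
  qed
qed

lemma sum_le_sum_over_cover:
  fixes f :: "'b \<Rightarrow> real"
  assumes "finite T" "finite S"
    and cover: "\<And>j. j \<in> T \<Longrightarrow> \<exists>s\<in>S. P s j"
    and nonneg: "\<And>j. j \<in> T \<Longrightarrow> 0 \<le> f j"
  shows "sum f T \<le> (\<Sum>s\<in>S. \<Sum>j\<in>{j\<in>T. P s j}. f j)"
proof -
  have "sum f T \<le> (\<Sum>j\<in>T. \<Sum>s\<in>S. if P s j then f j else 0)"
  proof (rule sum_mono)
    fix j assume j: "j \<in> T"
    then obtain s where "s \<in> S" "P s j" using cover by blast
    then show "f j \<le> (\<Sum>s\<in>S. if P s j then f j else 0)"
      using member_le_sum[of s S "\<lambda>s. if P s j then f j else 0"] assms(2) nonneg[OF j] by auto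
  qed
  also have "\<dots> = (\<Sum>s\<in>S. \<Sum>j\<in>T. if P s j then f j else 0)"
    by (rule sum.swap)
  also have "\<dots> = (\<Sum>s\<in>S. \<Sum>j\<in>{j\<in>T. P s j}. f j)"
    using assms(1) by (simp add: sum.inter_filter)
  finally show ?thesis .
qed

lemma sum_set_le_sum_list:
  fixes f :: "'b \<Rightarrow> real"
  assumes "\<And>x. x \<in> set xs \<Longrightarrow> 0 \<le> f x"
  shows "sum f (set xs) \<le> sum_list (map f xs)"
  using assms
proof (induction xs)
  case (Cons x xs)
  then have "0 \<le> f x" "sum f (set xs) \<le> sum_list (map f xs)" by auto
  then show ?case
    by (cases "x \<in> set xs") (auto simp: insert_absorb)
qed simp

subsection \<open>The growth loop\<close>

lemma subset_grow: "S \<subseteq> grow c \<rho> S l"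
  by (induction l arbitrary: S) (auto, blast)

lemma grow_pathset:
  assumes "m \<le> D" "\<forall>\<gamma>\<in>set l. rnode \<gamma> \<le> D"
  shows "\<exists>m'. grow c \<rho> (pathset m) l = pathset m' \<and> m \<le> m' \<and> m' \<le> D"
  using assms
proof (induction l arbitrary: m)
  case (Cons \<gamma> l)
  show ?case
  proof (cases "rnode \<gamma> \<in> pathset m \<or>
      setcost c (pathset m) + setcost c (pathset (rnode \<gamma>) - pathset m)
        > 2 * setcost c (pathset (rnode \<rho>))")
    case True
    then show ?thesis using Cons by auto
  next
    case False
    then have "grow c \<rho> (pathset m) (\<gamma> # l) = grow c \<rho> (pathset (max m (rnode \<gamma>))) l"
      by (simp add: pathset_Un_pathset)
    then show ?thesis using Cons.IH[of "max m (rnode \<gamma>)"] Cons.prems by force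
  qed
qed auto

lemma setcost_grow_le:
  assumes "finite S" "setcost c S \<le> 2 * setcost c (pathset (rnode \<rho>))"
  shows "setcost c (grow c \<rho> S l) \<le> 2 * setcost c (pathset (rnode \<rho>))"
  using assms
proof (induction l arbitrary: S)
  case (Cons \<gamma> l)
  have "finite (pathset (rnode \<gamma>))" by (simp add: pathset_def)
  then show ?case
    using Cons by (auto simp: setcost_Un not_less)
qed simp

lemma grow_stopped:
  assumes "sorted (map rdl l)" "\<gamma> \<in> set l" "rnode \<gamma> \<notin> grow c \<rho> S l"
    and "\<forall>x\<in>set l. 1 \<le> rnode x"
  shows "\<exists>\<gamma>'\<in>set l. rdl \<gamma>' \<le> rdl \<gamma> \<and> rnode \<gamma>' \<notin> grow c \<rho> S l \<and>
     setcost c (grow c \<rho> S l) + setcost c (pathset (rnode \<gamma>') - grow c \<rho> S l)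
       > 2 * setcost c (pathset (rnode \<rho>))"
  using assms
proof (induction l arbitrary: S)
  case (Cons g l)
  have sorted: "sorted (map rdl l)" and first: "rdl g \<le> rdl \<gamma>"
    using Cons.prems(1,2) by auto
  have g_in: "rnode g \<in> pathset (rnode g)"
    using Cons.prems(4) by (simp add: pathset_def)
  consider (skip) "rnode g \<in> S"
    | (stop) "rnode g \<notin> S"
        "setcost c S + setcost c (pathset (rnode g) - S) > 2 * setcost c (pathset (rnode \<rho>))"
    | (add) "rnode g \<notin> S"
        "\<not> setcost c S + setcost c (pathset (rnode g) - S) > 2 * setcost c (pathset (rnode \<rho>))"
    by blast
  then show ?case
  proof cases
    case skip
    then have "\<gamma> \<noteq> g"
      using subset_grow[of S c \<rho> l] Cons.prems(3) by auto
    then show ?thesis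
      using Cons.IH[OF sorted, of S] Cons.prems skip by auto
  next
    case stop
    then show ?thesis using first by (intro bexI[of _ g]) auto
  next
    case add
    then have "\<gamma> \<noteq> g"
      using subset_grow[of "S \<union> pathset (rnode g)" c \<rho> l] Cons.prems(3) g_in by auto
    then show ?thesis
      using Cons.IH[OF sorted, of "S \<union> pathset (rnode g)"] Cons.prems add by auto
  qed
qed simp

subsection \<open>The depth factor\<close>

definition depth_factor :: "nat \<Rightarrow> real" where
  "depth_factor v = 2 - 2 powr (1 - real v / 2)"

lemma depth_factor_mono: "v \<le> w \<Longrightarrow> depth_factor v \<le> depth_factor w"
  unfolding depth_factor_def by (auto intro!: powr_mono)

lemma depth_factor_nonneg: "1 \<le> v \<Longrightarrow> 0 \<le> depth_factor v"
  using powr_mono[of "1 - real v / 2" 1 2] by (simp add: depth_factor_def)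

lemma depth_factor_add_two: "depth_factor (v + 2) = depth_factor v / 2 + 1"
proof -
  have "2 powr (1 - real (v + 2) / 2) = 2 powr (1 - real v / 2) / 2 powr 1"
    by (subst powr_diff[symmetric]) (auto simp: field_simps)
  then show ?thesis by (simp add: depth_factor_def)
qed

lemma depth_factor_Suc: "1 \<le> v \<Longrightarrow> (depth_factor v + 1) / 2 \<le> depth_factor (Suc v)"
proof -
  assume "1 \<le> v"
  define p where "p = 2 powr (1 - real v / 2)"
  have p_pos: "0 < p" and p_le: "p \<le> sqrt 2"
    using \<open>1 \<le> v\<close> powr_mono[of "1 - real v / 2" "1/2" 2]
    by (auto simp: p_def powr_half_sqrt)
  have "1 - real (Suc v) / 2 = (1 - real v / 2) - 1/2"
    by (simp add: add_divide_distrib)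
  then have "2 powr (1 - real (Suc v) / 2) = 2 powr ((1 - real v / 2) - 1/2)"
    by (simp only:)
  also have "\<dots> = p / sqrt 2"
    using powr_half_sqrt[of 2] by (simp only: p_def powr_diff)
  finally have Suc_eq: "depth_factor (Suc v) = 2 - p / sqrt 2"
    by (simp add: depth_factor_def)
  have "p * (2 - sqrt 2) \<le> sqrt 2 * (2 - sqrt 2)"
    using p_le sqrt2_less_2 by (intro mult_right_mono) auto
  also have "\<dots> \<le> sqrt 2"
    using sqrt2_less_2 by (simp add: algebra_simps)
  finally have "p * (2 - sqrt 2) \<le> sqrt 2" .
  then have "(3 - p) / 2 \<le> 2 - p / sqrt 2"
    by (simp add: field_simps algebra_simps)
  then show ?thesis
    unfolding Suc_eq by (simp add: depth_factor_def p_def)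
qed

subsection \<open>A run of Double\<close>

locale double_run =
  fixes D :: nat and c :: "nat \<Rightarrow> real" and rs :: "request list"
  assumes valid: "valid_instance D c rs"
begin

definition "queue = sort_key rdl rs"
definition "N = length rs"

text \<open>Event j (counted from 0) is the deadline of req j;
  state j is the state before it.\<close>

definition "state j = fold (\<lambda>\<rho> st. double_step c rs st \<rho>) (take j queue) ({}, [])"
definition "served j = fst (state j)"
definition "sched j = snd (state j)"
definition "req j = queue ! j"
definition "dl j = rdl (req j)"
definition "nd j = rnode (req j)"
definition "pending j = filter (\<lambda>\<gamma>. rarr \<gamma> \<le> dl j \<and> \<gamma> \<notin> served j) queue"
definition "svc j = grow c (req j) (pathset (nd j)) (pending j)"
definition "fires j \<longleftrightarrow> req j \<notin> served j"
definition "path_cost v = setcost c (pathset v)"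
definition "svc_cost j = setcost c (svc j)"

lemma D_ge_1: "1 \<le> D"
  using valid by (simp add: valid_instance_def)

lemma cost_pos: "1 \<le> v \<Longrightarrow> v \<le> D \<Longrightarrow> 0 < c v"
  using valid by (simp add: valid_instance_def)

lemma request_wf: "\<gamma> \<in> set rs \<Longrightarrow> 1 \<le> rnode \<gamma> \<and> rnode \<gamma> \<le> D \<and> rarr \<gamma> \<le> rdl \<gamma>"
  using valid by (auto simp: valid_instance_def)

lemma request_eqI: "\<gamma> \<in> set rs \<Longrightarrow> \<delta> \<in> set rs \<Longrightarrow> rdl \<gamma> = rdl \<delta> \<Longrightarrow> \<gamma> = \<delta>"
  using valid by (auto simp: valid_instance_def distinct_map inj_on_def)

lemma set_queue: "set queue = set rs"
  by (simp add: queue_def)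

lemma sorted_queue: "sorted (map rdl queue)"
  by (simp add: queue_def)

lemma req_in: "j < N \<Longrightarrow> req j \<in> set rs"
  by (metis N_def length_sort nth_mem queue_def req_def set_queue)

lemma nd_bounds: "j < N \<Longrightarrow> 1 \<le> nd j \<and> nd j \<le> D"
  using request_wf[OF req_in] by (simp add: nd_def)

lemma dl_less_iff: "i < N \<Longrightarrow> j < N \<Longrightarrow> dl i < dl j \<longleftrightarrow> i < j"
proof -
  have "distinct (map rdl queue)"
    using valid by (simp add: queue_def valid_instance_def distinct_map)
  then have "sorted_wrt (<) (map rdl queue)"
    using sorted_queue strict_sorted_iff by blast
  then have "i < j \<Longrightarrow> j < N \<Longrightarrow> dl i < dl j" for i j
    by (auto simp: sorted_wrt_iff_nth_less dl_def req_def queue_def N_def)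
  then show "i < N \<Longrightarrow> j < N \<Longrightarrow> dl i < dl j \<longleftrightarrow> i < j"
    by (metis linorder_neq_iff order_less_asym)
qed

lemma req_surj: "\<gamma> \<in> set rs \<Longrightarrow> \<exists>g<N. req g = \<gamma>"
  by (metis N_def in_set_conv_nth length_sort queue_def req_def set_queue)

lemma state_Suc:
  assumes "j < N"
  shows "state (Suc j) = (if fires j
     then (served j \<union> {\<gamma>\<in>set rs. satisfies (svc j, dl j) \<gamma>}, sched j @ [(svc j, dl j)])
     else state j)"
proof -
  have "take (Suc j) queue = take j queue @ [req j]"
    using assms by (simp add: take_Suc_conv_app_nth req_def queue_def N_def)
  moreover have pair: "state j = (served j, sched j)"
    by (simp add: served_def sched_def)
  ultimately have "state (Suc j) = double_step c rs (served j, sched j) (req j)"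
    by (simp add: state_def)
  then show ?thesis
    by (simp add: double_step_def fires_def Let_def svc_def pending_def dl_def nd_def queue_def pair)
qed

lemma served_Suc: "j < N \<Longrightarrow> served (Suc j) =
    (if fires j then served j \<union> {\<gamma>\<in>set rs. satisfies (svc j, dl j) \<gamma>} else served j)"
  using state_Suc by (simp add: served_def)

lemma sched_Suc: "j < N \<Longrightarrow> sched (Suc j) = (if fires j then sched j @ [(svc j, dl j)] else sched j)"
  using state_Suc by (simp add: sched_def)

lemma served_mono: "i \<le> j \<Longrightarrow> j \<le> N \<Longrightarrow> served i \<subseteq> served j"
  by (induction j) (auto simp: served_Suc le_Suc_eq)

lemma svc_pathset:
  assumes "j < N"
  shows "\<exists>m. svc j = pathset m \<and> nd j \<le> m \<and> m \<le> D"
proof -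
  have "\<forall>\<gamma>\<in>set (pending j). rnode \<gamma> \<le> D"
    using request_wf by (auto simp: pending_def set_queue)
  then show ?thesis
    using grow_pathset[of "nd j" D "pending j" c "req j"] nd_bounds[OF assms]
    by (simp add: svc_def)
qed

lemma satisfies_svc_req:
  assumes "j < N"
  shows "satisfies (svc j, dl j) (req j)"
proof -
  have "nd j \<in> pathset (nd j)"
    using nd_bounds[OF assms] by (simp add: pathset_def)
  then have "nd j \<in> svc j"
    using subset_grow unfolding svc_def by blast
  then show ?thesis
    using request_wf[OF req_in[OF assms]] by (simp add: satisfies_def nd_def dl_def)
qed

lemma req_served: "g < N \<Longrightarrow> req g \<in> served (Suc g)"
  using served_Suc[of g] satisfies_svc_req[of g] req_in[of g] by (auto simp: fires_def)

lemma first_serving_event: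
  assumes "\<gamma> \<notin> served i" "\<gamma> \<in> served j" "i \<le> N" "j \<le> N"
  shows "\<exists>k. i \<le> k \<and> k < j \<and> fires k \<and> satisfies (svc k, dl k) \<gamma>"
  using assms
proof (induction j)
  case 0
  then show ?case by (simp add: served_def state_def)
next
  case (Suc j)
  show ?case
  proof (cases "\<gamma> \<in> served j")
    case True
    then show ?thesis using Suc by fastforce
  next
    case False
    then have "fires j \<and> satisfies (svc j, dl j) \<gamma>"
      using Suc.prems served_Suc[of j] by (auto split: if_splits)
    moreover have "i \<le> j"
      using served_mono[of "Suc j" i] Suc.prems False by (cases "i \<le> j") auto
    ultimately show ?thesis by auto
  qed
qed

lemma path_cost_Suc: "path_cost (Suc v) = path_cost v + c (Suc v)"
  by (simp add: path_cost_def setcost_def pathset_def)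

lemma path_cost_mono: "v \<le> w \<Longrightarrow> w \<le> D \<Longrightarrow> path_cost v \<le> path_cost w"
proof (induction w)
  case (Suc w)
  then show ?case
    using cost_pos[of "Suc w"] by (cases "v = Suc w") (auto simp: path_cost_Suc)
qed simp

lemma path_cost_nonneg: "v \<le> D \<Longrightarrow> 0 \<le> path_cost v"
  using path_cost_mono[of 0 v] by (simp add: path_cost_def setcost_def pathset_def)

lemma path_cost_le_setcost:
  assumes "rooted_subtree D Q" "v \<in> Q"
  shows "path_cost v \<le> setcost c Q"
proof -
  have "Q \<subseteq> {1..D}" using assms(1) by (simp add: rooted_subtree_def)
  moreover from this have "\<forall>u\<in>Q. 0 \<le> c u"
    using cost_pos by (force intro: less_imp_le)
  ultimately show ?thesis
    unfolding path_cost_def setcost_def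
    using subtree_pathset[OF assms] by (intro sum_mono2) (auto intro: finite_subset)
qed

lemma setcost_subtree_nonneg: "rooted_subtree D Q \<Longrightarrow> 0 \<le> setcost c Q"
  unfolding setcost_def rooted_subtree_def using cost_pos by (force intro: sum_nonneg less_imp_le)

lemma svc_cost_le: "j < N \<Longrightarrow> svc_cost j \<le> 2 * path_cost (nd j)"
  using setcost_grow_le[of "pathset (nd j)" c "req j" "pending j"] path_cost_nonneg nd_bounds
  by (auto simp: svc_cost_def svc_def path_cost_def nd_def pathset_def)

lemma svc_cost_nonneg: "j < N \<Longrightarrow> 0 \<le> svc_cost j"
  using svc_pathset[of j] path_cost_nonneg by (auto simp: svc_cost_def path_cost_def)

subsection \<open>Triggers charged to one service\<close>

text \<open>In the following lemmas the hypotheses on i < j say that both are triggers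
  whose requests are satisfied by a common service, so req j has arrived by dl i.\<close>

lemma nd_notin_svc:
  assumes "i < j" "j < N" "fires i" "fires j" "rarr (req j) \<le> dl i"
  shows "nd j \<notin> svc i"
proof
  assume "nd j \<in> svc i"
  moreover have "dl i < dl j" using dl_less_iff assms(1,2) by simp
  ultimately have "satisfies (svc i, dl i) (req j)"
    using assms(5) by (simp add: satisfies_def nd_def dl_def)
  then have "req j \<in> served (Suc i)"
    using served_Suc[of i] assms req_in[of j] by simp
  then show False
    using served_mono[of "Suc i" j] assms by (auto simp: fires_def)
qed

text \<open>A request left pending by the service of i either is req j or is
  served by a later service before j, which does not reach nd j.\<close>

lemma pending_node_le:
  assumes ij: "i < j" "j < N" "fires i" "fires j" "rarr (req j) \<le> dl i"
    and \<gamma>: "\<gamma> \<in> set (pending i)" "rdl \<gamma> \<le> dl j" "rnode \<gamma> \<notin> svc i"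
  shows "rnode \<gamma> \<le> nd j"
proof (cases "\<gamma> = req j")
  case False
  have \<gamma>_rs: "\<gamma> \<in> set rs" and unserved: "\<gamma> \<notin> served i"
    using \<gamma>(1) by (auto simp: pending_def set_queue)
  obtain g where g: "g < N" "req g = \<gamma>" using req_surj[OF \<gamma>_rs] by blast
  have "dl g < dl j"
    using \<gamma>(2) False request_eqI[OF \<gamma>_rs req_in[OF ij(2)]] g(2) by (force simp: dl_def)
  then have "g < j" using dl_less_iff g(1) ij(2) by blast
  obtain k where k: "i \<le> k" "k < Suc g" "fires k" "satisfies (svc k, dl k) \<gamma>"
    using first_serving_event[of \<gamma> i "Suc g"] unserved req_served[OF g(1)] g ij by auto
  have "k \<noteq> i" using k(4) \<gamma>(3) by (auto simp: satisfies_def)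
  then have ik: "i < k" "k < j" using k(1,2) \<open>g < j\<close> by auto
  moreover have "dl i < dl k"
    using dl_less_iff[of i k] ik ij(2) by simp
  ultimately have "nd j \<notin> svc k"
    using nd_notin_svc[of k j] ij k(3) by simp
  moreover obtain m where "svc k = pathset m" using svc_pathset[of k] ik ij(2) by auto
  ultimately show ?thesis
    using k(4) nd_bounds[OF ij(2)] by (auto simp: satisfies_def pathset_def)
qed (simp add: nd_def)

lemma path_cost_doubles:
  assumes ij: "i < j" "j < N" "fires i" "fires j" "rarr (req j) \<le> dl i"
  shows "2 * path_cost (nd i) < path_cost (nd j)"
proof -
  have iN: "i < N" using ij by simp
  have "sorted (map rdl (pending i))"
    unfolding pending_def using sorted_queue by (rule sorted_filter)
  moreover have "req j \<in> set (pending i)"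
    using req_in[OF ij(2)] ij(5) served_mono[of i j] ij(1,2,4)
    by (auto simp: pending_def set_queue fires_def)
  moreover have "rnode (req j) \<notin> grow c (req i) (pathset (nd i)) (pending i)"
    using nd_notin_svc[OF ij] by (simp add: nd_def svc_def)
  moreover have "\<forall>x\<in>set (pending i). 1 \<le> rnode x"
    using request_wf by (auto simp: pending_def set_queue)
  ultimately have "\<exists>\<gamma>\<in>set (pending i). rdl \<gamma> \<le> dl j \<and> rnode \<gamma> \<notin> svc i \<and>
      2 * path_cost (nd i) < setcost c (svc i) + setcost c (pathset (rnode \<gamma>) - svc i)"
    unfolding svc_def path_cost_def nd_def dl_def by (rule grow_stopped)
  then obtain \<gamma> where \<gamma>: "\<gamma> \<in> set (pending i)" "rdl \<gamma> \<le> dl j" "rnode \<gamma> \<notin> svc i"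
    "2 * path_cost (nd i) < setcost c (svc i) + setcost c (pathset (rnode \<gamma>) - svc i)"
    by blast
  obtain m where m: "svc i = pathset m" using svc_pathset[OF iN] by blast
  have "1 \<le> rnode \<gamma>" "rnode \<gamma> \<le> nd j"
    using \<gamma>(1) request_wf pending_node_le[OF ij \<gamma>(1-3)] by (auto simp: pending_def set_queue)
  then have "svc i \<union> pathset (rnode \<gamma>) = pathset (rnode \<gamma>)"
    using m \<gamma>(3) by (auto simp: pathset_def)
  then have "setcost c (svc i) + setcost c (pathset (rnode \<gamma>) - svc i) = path_cost (rnode \<gamma>)"
    using setcost_Un[of "svc i" "pathset (rnode \<gamma>)" c] m by (simp add: path_cost_def pathset_def)
  then have "2 * path_cost (nd i) < path_cost (rnode \<gamma>)"
    using \<gamma>(4) by simp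
  also have "\<dots> \<le> path_cost (nd j)"
    using path_cost_mono \<open>rnode \<gamma> \<le> nd j\<close> nd_bounds[OF ij(2)] by blast
  finally show ?thesis .
qed

text \<open>If the service of i is just the path to nd i, it costs less than half of
  path_cost (nd j) and nd j lies at least one level deeper; otherwise it reaches below
  nd i, so nd j lies at least two levels deeper. The two recursions of depth_factor
  cover exactly these cases.\<close>

lemma charge_step:
  assumes ij: "i < j" "j < N" "fires i" "fires j" "rarr (req j) \<le> dl i"
  shows "svc_cost i + depth_factor (nd i) * path_cost (nd i)
    \<le> depth_factor (nd j) * path_cost (nd j)"
proof -
  have iN: "i < N" using ij by simp
  have doubles: "2 * path_cost (nd i) < path_cost (nd j)" using path_cost_doubles[OF ij] .
  have h_i: "0 \<le> depth_factor (nd i)" using depth_factor_nonneg nd_bounds[OF iN] by simp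
  have cost_j_nonneg: "0 \<le> path_cost (nd j)" using path_cost_nonneg nd_bounds[OF ij(2)] by simp
  obtain m where m: "svc i = pathset m" "nd i \<le> m" using svc_pathset[OF iN] by blast
  have "m < nd j"
    using nd_notin_svc[OF ij] m(1) nd_bounds[OF ij(2)] by (auto simp: pathset_def)
  have h_cost_i:
    "depth_factor (nd i) * path_cost (nd i) \<le> depth_factor (nd i) * (path_cost (nd j) / 2)"
    using doubles h_i by (intro mult_left_mono) auto
  show ?thesis
  proof (cases "m = nd i")
    case True
    then have "svc_cost i + depth_factor (nd i) * path_cost (nd i)
        \<le> (depth_factor (nd i) + 1) / 2 * path_cost (nd j)"
      using doubles h_cost_i m(1) by (simp add: svc_cost_def path_cost_def algebra_simps)
    also have "\<dots> \<le> depth_factor (Suc (nd i)) * path_cost (nd j)"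
      using depth_factor_Suc nd_bounds[OF iN] cost_j_nonneg by (intro mult_right_mono) auto
    also have "\<dots> \<le> depth_factor (nd j) * path_cost (nd j)"
      using depth_factor_mono \<open>m < nd j\<close> True cost_j_nonneg by (intro mult_right_mono) auto
    finally show ?thesis .
  next
    case False
    have "svc_cost i \<le> path_cost (nd j)"
      using m(1) path_cost_mono \<open>m < nd j\<close> nd_bounds[OF ij(2)]
      by (simp add: svc_cost_def path_cost_def)
    then have "svc_cost i + depth_factor (nd i) * path_cost (nd i)
        \<le> (depth_factor (nd i) / 2 + 1) * path_cost (nd j)"
      using h_cost_i by (simp add: algebra_simps)
    also have "\<dots> = depth_factor (nd i + 2) * path_cost (nd j)"
      by (simp only: depth_factor_add_two)
    also have "\<dots> \<le> depth_factor (nd j) * path_cost (nd j)"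
      using depth_factor_mono \<open>m < nd j\<close> False m(2) cost_j_nonneg by (intro mult_right_mono) auto
    finally show ?thesis .
  qed
qed

lemma charged_before_le:
  assumes overlap: "\<And>i j. i \<in> J \<Longrightarrow> j \<in> J \<Longrightarrow> i < j \<Longrightarrow> rarr (req j) \<le> dl i"
    and triggers: "\<And>j. j \<in> J \<Longrightarrow> j < N \<and> fires j"
  shows "j \<in> J \<Longrightarrow>
    (\<Sum>i\<in>{i\<in>J. i < j}. svc_cost i) \<le> depth_factor (nd j) * path_cost (nd j)"
proof (induction j rule: less_induct)
  case (less j)
  have jN: "j < N" using triggers less.prems by auto
  show ?case
  proof (cases "{i\<in>J. i < j} = {}")
    case True
    show ?thesis
      unfolding True using path_cost_nonneg depth_factor_nonneg nd_bounds[OF jN] by simp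
  next
    case False
    define i where "i = Max {i\<in>J. i < j}"
    have i: "i \<in> J" "i < j" using Max_in[OF _ False] by (auto simp: i_def)
    have "{i'\<in>J. i' < j} = insert i {i'\<in>J. i' < i}"
      using i Max_ge[of "{i\<in>J. i < j}"] by (fastforce simp: i_def)
    then have "(\<Sum>i'\<in>{i'\<in>J. i' < j}. svc_cost i')
        = svc_cost i + (\<Sum>i'\<in>{i'\<in>J. i' < i}. svc_cost i')"
      by simp
    also have "\<dots> \<le> svc_cost i + depth_factor (nd i) * path_cost (nd i)"
      using less.IH i by simp
    also have "\<dots> \<le> depth_factor (nd j) * path_cost (nd j)"
      using charge_step[of i j] i jN triggers overlap less.prems by blast
    finally show ?thesis .
  qed
qed

lemma charged_cost_le:
  assumes Q: "rooted_subtree D Q"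
  shows "(\<Sum>j\<in>{j. j < N \<and> fires j \<and> satisfies (Q, \<tau>) (req j)}. svc_cost j)
          \<le> (depth_factor D + 2) * setcost c Q"
proof -
  define J where "J = {j. j < N \<and> fires j \<and> satisfies (Q, \<tau>) (req j)}"
  have h_D: "0 \<le> depth_factor D" using depth_factor_nonneg D_ge_1 by simp
  show ?thesis
  proof (cases "J = {}")
    case True
    then show ?thesis
      using setcost_subtree_nonneg[OF Q] h_D by (simp add: J_def[symmetric])
  next
    case False
    define j where "j = Max J"
    have "finite J" by (simp add: J_def)
    have "j \<in> J" using Max_in[OF \<open>finite J\<close> False] by (simp add: j_def)
    then have j: "j \<in> J" "J = insert j {i\<in>J. i < j}"
      using Max_ge[OF \<open>finite J\<close>] by (fastforce simp: j_def)+
    have jN: "j < N" using j(1) by (simp add: J_def)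
    have "(\<Sum>i\<in>J. svc_cost i) = svc_cost j + (\<Sum>i\<in>{i\<in>J. i < j}. svc_cost i)"
      by (subst j(2)) (simp add: \<open>finite J\<close>)
    also have "\<dots> \<le> 2 * path_cost (nd j) + depth_factor (nd j) * path_cost (nd j)"
      using charged_before_le[of J j] svc_cost_le[OF jN] j(1)
      by (fastforce simp: J_def satisfies_def dl_def)
    also have "\<dots> \<le> (depth_factor D + 2) * path_cost (nd j)"
      using depth_factor_mono path_cost_nonneg nd_bounds[OF jN]
      by (simp add: algebra_simps mult_right_mono)
    also have "\<dots> \<le> (depth_factor D + 2) * setcost c Q"
      using path_cost_le_setcost[OF Q, of "nd j"] j(1) h_D
      by (intro mult_left_mono) (auto simp: J_def satisfies_def nd_def)
    finally show ?thesis by (simp add: J_def)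
  qed
qed

subsection \<open>Feasibility and the cost of Double\<close>

lemma double_eq_sched: "double c rs = sched N"
  by (simp add: double_def sched_def state_def queue_def N_def)

lemma in_sched: "k \<le> N \<Longrightarrow> s \<in> set (sched k) \<Longrightarrow> \<exists>j<k. s = (svc j, dl j)"
proof (induction k)
  case (Suc k)
  then show ?case using sched_Suc[of k] by (fastforce simp: less_Suc_eq split: if_splits)
qed (simp add: sched_def state_def)

lemma served_satisfied: "k \<le> N \<Longrightarrow> \<gamma> \<in> served k \<Longrightarrow> \<exists>s\<in>set (sched k). satisfies s \<gamma>"
proof (induction k)
  case (Suc k)
  then show ?case using served_Suc[of k] sched_Suc[of k] by (auto split: if_splits)
qed (simp add: served_def state_def)

lemma sched_cost_sched:
  "k \<le> N \<Longrightarrow> sched_cost c (sched k) = (\<Sum>j\<in>{j. j < k \<and> fires j}. svc_cost j)"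
proof (induction k)
  case 0
  then show ?case by (simp add: sched_def state_def sched_cost_def)
next
  case (Suc k)
  show ?case
  proof (cases "fires k")
    case True
    then have "{j. j < Suc k \<and> fires j} = insert k {j. j < k \<and> fires j}"
      by (auto simp: less_Suc_eq)
    then show ?thesis
      using Suc sched_Suc[of k] True by (simp add: sched_cost_def svc_cost_def)
  next
    case False
    then have "{j. j < Suc k \<and> fires j} = {j. j < k \<and> fires j}"
      by (auto simp: less_Suc_eq)
    then show ?thesis
      using Suc sched_Suc[of k] False by simp
  qed
qed

lemma feasible_double: "feasible D rs (double c rs)"
  unfolding feasible_def double_eq_sched
proof (intro conjI ballI)
  fix s assume "s \<in> set (sched N)"
  then obtain j where j: "j < N" "s = (svc j, dl j)"
    using in_sched by blast
  then obtain m where "svc j = pathset m" "nd j \<le> m" "m \<le> D"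
    using svc_pathset by blast
  then show "rooted_subtree D (fst s)"
    using nd_bounds[OF j(1)] j(2) by (auto simp: rooted_subtree_def pathset_def)
next
  fix \<rho> assume "\<rho> \<in> set rs"
  then obtain g where "g < N" "req g = \<rho>" using req_surj by blast
  then have "\<rho> \<in> served N" using req_served served_mono[of "Suc g" N] by auto
  then show "\<exists>s\<in>set (sched N). satisfies s \<rho>" using served_satisfied by simp
qed

lemma cost_double_le:
  assumes feasible: "feasible D rs sch"
  shows "sched_cost c (double c rs) \<le> (depth_factor D + 2) * sched_cost c sch"
proof -
  define R where "R = depth_factor D + 2"
  define T where "T = {j. j < N \<and> fires j}"
  have R_nonneg: "0 \<le> R" using depth_factor_nonneg D_ge_1 by (simp add: R_def)
  have subtree: "\<And>s. s \<in> set sch \<Longrightarrow> rooted_subtree D (fst s)"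
    using feasible by (simp add: feasible_def)
  have "sched_cost c (double c rs) = (\<Sum>j\<in>T. svc_cost j)"
    by (simp add: double_eq_sched T_def sched_cost_sched)
  also have "\<dots> \<le> (\<Sum>s\<in>set sch. \<Sum>j\<in>{j\<in>T. satisfies s (req j)}. svc_cost j)"
    using sum_le_sum_over_cover[of T "set sch" "\<lambda>s j. satisfies s (req j)" svc_cost]
      feasible req_in svc_cost_nonneg by (simp add: T_def feasible_def)
  also have "\<dots> \<le> (\<Sum>s\<in>set sch. R * setcost c (fst s))"
  proof (rule sum_mono)
    fix s assume "s \<in> set sch"
    obtain Q \<tau> where s: "s = (Q, \<tau>)" by fastforce
    have "{j\<in>T. satisfies s (req j)} = {j. j < N \<and> fires j \<and> satisfies (Q, \<tau>) (req j)}"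
      by (auto simp: T_def s)
    then show "(\<Sum>j\<in>{j\<in>T. satisfies s (req j)}. svc_cost j) \<le> R * setcost c (fst s)"
      using charged_cost_le[of Q \<tau>] subtree[OF \<open>s \<in> set sch\<close>] by (simp add: R_def s)
  qed
  also have "\<dots> \<le> R * sched_cost c sch"
    using sum_set_le_sum_list[of sch "\<lambda>s. R * setcost c (fst s)"] R_nonneg
      setcost_subtree_nonneg[OF subtree]
    by (simp add: sched_cost_def sum_list_const_mult)
  finally show ?thesis by (simp add: R_def)
qed

end

theorem mainTheorem5:
  fixes D :: nat
  assumes "D \<ge> 1"
  shows "competitive_on_path D double (4 - 2 powr (1 - real D / 2))"
proof -
  have ratio: "4 - 2 powr (1 - real D / 2) = depth_factor D + 2"
    by (simp add: depth_factor_def)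
  show ?thesis
    unfolding competitive_on_path_def ratio
  proof (intro allI impI)
    fix c rs assume "valid_instance D c rs"
    then interpret double_run D c rs by unfold_locales
    show "feasible D rs (double c rs) \<and> (\<forall>sch. feasible D rs sch \<longrightarrow>
        sched_cost c (double c rs) \<le> (depth_factor D + 2) * sched_cost c sch)"
      using feasible_double cost_double_le by blast
  qed
qed

end
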